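(* Every non-isotropic vector $\alpha\in A_N$ (i.e. $q_N(\alpha)=1$) is represented by $(r+\rho(r))/2\bmod N$ for a suitable $r\in N$ with $r^2=-2$.
   Context: Lattices: $U$ has Gram matrix $\begin{pmatrix}0&1\\1&0\end{pmatrix}$; $D_4$ negative definite; $U(2)$ is $U$ with doubled form. $N=U\oplus U(2)\oplus D_4\oplus D_4$, $A_N=N^*/N\cong\mathbb F_2^6$, $q_N:A_N\to\mathbb Z/2\mathbb Z$, $q_N(x)=\langle x,x\rangle\bmod2\mathbb Z$ (values lie in $\mathbb Z/2\mathbb Z$). $\rho=\rho_1\oplus\rho_0\oplus\rho_0\in O(N)$, where for $D_4=\{x\in\mathbb Z^4:\sum x_i\equiv0\bmod 2\}$ (negative standard inner product) $\rho_0(x_1,x_2,x_3,x_4)=(x_2,-x_1,x_4,-x_3)$, and for standard hyperbolic bases $e,f$ of $U$, $e',f'$ of $U(2)$, $\rho_1(e)=-e-e'$, $\rho_1(f)=f-f'$, $\rho_1(e')=e'+2e$, $\rho_1(f')=2f-f'$. For $r\in N$, $r^2=-2$, one has $(r+\rho(r))/2\in N^*$. *)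

theory Defs
  imports Complex_Main
begin

text \<open>Ambient space: N \<otimes> Q, vectors v :: nat \<Rightarrow> rat supported on indices 0..11.
  Coordinates: 0,1 = coefficients of e,f (hyperbolic basis of U);
  2,3 = coefficients of e',f' (basis of U(2));
  4..7 = first D4 (inside Z^4), 8..11 = second D4.\<close>

definition amb :: "(nat \<Rightarrow> rat) set" where
  "amb = {v. \<forall>i\<ge>12. v i = 0}"

definition bil :: "(nat \<Rightarrow> rat) \<Rightarrow> (nat \<Rightarrow> rat) \<Rightarrow> rat" where
  "bil v w = v 0 * w 1 + v 1 * w 0 + 2 * (v 2 * w 3 + v 3 * w 2)
            - (\<Sum>i\<in>{4..<12}. v i * w i)"

definition latN :: "(nat \<Rightarrow> rat) set" where
  "latN = {v \<in> amb. (\<forall>i<12. v i \<in> \<int>)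
                 \<and> (\<Sum>i\<in>{4..<8}. v i) / 2 \<in> \<int>
                 \<and> (\<Sum>i\<in>{8..<12}. v i) / 2 \<in> \<int>}"

definition dualN :: "(nat \<Rightarrow> rat) set" where
  "dualN = {v \<in> amb. \<forall>w\<in>latN. bil v w \<in> \<int>}"

text \<open>The isometry rho = rho1 + rho0 + rho0 (extended Q-linearly), in coordinates:
  rho1(a e + b f + c e' + d f') = (2c - a) e + (b + 2d) f + (c - a) e' + (-b - d) f',
  rho0(x1,x2,x3,x4) = (x2,-x1,x4,-x3).\<close>
definition rho :: "(nat \<Rightarrow> rat) \<Rightarrow> (nat \<Rightarrow> rat)" where
  "rho v = (\<lambda>i.
     if i = 0 then - v 0 + 2 * v 2
     else if i = 1 then v 1 + 2 * v 3
     else if i = 2 then - v 0 + v 2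
     else if i = 3 then - v 1 - v 3
     else if i = 4 \<or> i = 6 \<or> i = 8 \<or> i = 10 then v (i + 1)
     else if i = 5 \<or> i = 7 \<or> i = 9 \<or> i = 11 then - v (i - 1)
     else 0)"

definition qN_is_one :: "(nat \<Rightarrow> rat) \<Rightarrow> bool" where
  "qN_is_one x \<longleftrightarrow> (bil x x - 1) / 2 \<in> \<int>"

end

theory Submission
  imports Defs
begin

(* Write alpha = k/2 with k integral.  On each D4 summand, the four classes of D4*/D4 are
   represented by (x + rho0 x)/2 with x in {0, (1,1,0,0), (0,1,0,1), (0,1,1,0)}, and since x and
   rho0 x are orthogonal of equal norm, ((x + rho0 x)/2)^2 = x^2/2: the trivial class needs x^2 = 0,
   the others x^2 = -2.  On U + U(2), r = a e + b f gives (r + rho r)/2 = b f - (a e' + b f')/2, so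
   only the parities of a and b are prescribed by alpha, while r^2 = 2ab.  Comparing discriminant
   forms, q_N(alpha) = 1 says that k2 k3 has the parity of n = (|x|^2 + |y|^2)/2 - 1, where x, y are
   the two D4 parts; as |n| <= 1, one can choose a, b with these parities and ab = n, which gives
   r^2 = 2n - |x|^2 - |y|^2 = -2. *)

lemma sum_4_8: "(\<Sum>i\<in>{4..<8::nat}. f i) = f 4 + f 5 + f 6 + f 7"
  by (simp add: eval_nat_numeral atLeastLessThanSuc add_ac)

lemma sum_8_12: "(\<Sum>i\<in>{8..<12::nat}. f i) = f 8 + f 9 + f 10 + f 11"
  by (simp add: eval_nat_numeral atLeastLessThanSuc add_ac)

lemma latN_iff:
  "v \<in> latN \<longleftrightarrow> (\<forall>i\<ge>12. v i = 0) \<and> (\<forall>i<12. v i \<in> \<int>) \<and>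
     (v 4 + v 5 + v 6 + v 7) / 2 \<in> \<int> \<and> (v 8 + v 9 + v 10 + v 11) / 2 \<in> \<int>"
  by (simp add: latN_def amb_def sum_4_8 sum_8_12)

lemma bil_eq:
  "bil v w = v 0 * w 1 + v 1 * w 0 + 2 * (v 2 * w 3 + v 3 * w 2)
     - (v 4 * w 4 + v 5 * w 5 + v 6 * w 6 + v 7 * w 7)
     - (v 8 * w 8 + v 9 * w 9 + v 10 * w 10 + v 11 * w 11)"
  by (simp add: bil_def sum.atLeastLessThan_concat[of 4 8 12, symmetric] sum_4_8 sum_8_12)

lemma less_twelve_cases: "i < 12 \<Longrightarrow> i \<in> {0, 1, 2, 3, 4, 5, 6, 7, 8, 9, 10, 11 :: nat}"
  by (auto simp: lessThan_nat_numeral simp flip: lessThan_iff)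

lemma of_int_div_numeral_in_Ints_iff:
  "(of_int m / numeral n :: 'a :: {division_ring, ring_char_0}) \<in> \<int> \<longleftrightarrow> numeral n dvd m"
  using of_int_div_of_int_in_Ints_iff[of m "numeral n", where 'a = 'a] by simp

lemma dualN_doubled_coordinates:
  assumes "\<alpha> \<in> dualN"
  obtains k :: "nat \<Rightarrow> int"
  where "\<alpha> = (\<lambda>i. of_int (k i) / 2)" and "\<forall>i\<ge>12. k i = 0" and "even (k 0)" "even (k 1)"
    and "even (k 5 - k 4)" "even (k 6 - k 4)" "even (k 7 - k 4)"
    and "even (k 9 - k 8)" "even (k 10 - k 8)" "even (k 11 - k 8)"
proof -
  have probe: "bil \<alpha> w \<in> \<int>" if "w \<in> latN" for w
    using assms that by (simp add: dualN_def)
  have "bil \<alpha> (\<lambda>j. if j = 1 then 1 else 0) \<in> \<int>" "bil \<alpha> (\<lambda>j. if j = 0 then 1 else 0) \<in> \<int>"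
    "bil \<alpha> (\<lambda>j. if j = 3 then 1 else 0) \<in> \<int>" "bil \<alpha> (\<lambda>j. if j = 2 then 1 else 0) \<in> \<int>"
    by (intro probe, simp add: latN_iff)+
  then have U: "\<alpha> 0 \<in> \<int>" "\<alpha> 1 \<in> \<int>" "2 * \<alpha> 2 \<in> \<int>" "2 * \<alpha> 3 \<in> \<int>"
    by (simp_all add: bil_eq)
  have "bil \<alpha> (\<lambda>j. if j = 4 then 2 else 0) \<in> \<int>"
    "bil \<alpha> (\<lambda>j. if j = 4 then 1 else if j = 5 then -1 else 0) \<in> \<int>"
    "bil \<alpha> (\<lambda>j. if j = 4 then 1 else if j = 6 then -1 else 0) \<in> \<int>"
    "bil \<alpha> (\<lambda>j. if j = 4 then 1 else if j = 7 then -1 else 0) \<in> \<int>"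
    by (intro probe, simp add: latN_iff)+
  then have X: "2 * \<alpha> 4 \<in> \<int>" "\<alpha> 5 - \<alpha> 4 \<in> \<int>" "\<alpha> 6 - \<alpha> 4 \<in> \<int>" "\<alpha> 7 - \<alpha> 4 \<in> \<int>"
    by (simp_all add: bil_eq mult.commute)
  have "bil \<alpha> (\<lambda>j. if j = 8 then 2 else 0) \<in> \<int>"
    "bil \<alpha> (\<lambda>j. if j = 8 then 1 else if j = 9 then -1 else 0) \<in> \<int>"
    "bil \<alpha> (\<lambda>j. if j = 8 then 1 else if j = 10 then -1 else 0) \<in> \<int>"
    "bil \<alpha> (\<lambda>j. if j = 8 then 1 else if j = 11 then -1 else 0) \<in> \<int>"
    by (intro probe, simp add: latN_iff)+
  then have Y: "2 * \<alpha> 8 \<in> \<int>" "\<alpha> 9 - \<alpha> 8 \<in> \<int>" "\<alpha> 10 - \<alpha> 8 \<in> \<int>" "\<alpha> 11 - \<alpha> 8 \<in> \<int>"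
    by (simp_all add: bil_eq mult.commute)
  have shift: "2 * \<alpha> i \<in> \<int>" if "2 * \<alpha> j \<in> \<int>" "\<alpha> i - \<alpha> j \<in> \<int>" for i j
  proof -
    have "2 * \<alpha> i = 2 * \<alpha> j + 2 * (\<alpha> i - \<alpha> j)" by simp
    with that show ?thesis by (metis Ints_add Ints_mult Ints_numeral)
  qed
  have zero: "\<alpha> i = 0" if "i \<ge> 12" for i
    using assms that by (simp add: dualN_def amb_def)
  have doubled: "2 * \<alpha> i \<in> \<int>" for i
  proof (cases "i < 12")
    case True
    then show ?thesis
      using less_twelve_cases[OF True] U X Y shift[OF X(1)] shift[OF Y(1)]
        Ints_mult[OF Ints_numeral]
      by auto
  qed (simp add: zero)
  define k where "k i = \<lfloor>2 * \<alpha> i\<rfloor>" for i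
  have \<alpha>: "\<alpha> = (\<lambda>i. of_int (k i) / 2)"
  proof
    fix i
    from doubled[of i] obtain n where "2 * \<alpha> i = of_int n" by (elim Ints_cases)
    then show "\<alpha> i = of_int (k i) / 2" by (simp add: k_def)
  qed
  show ?thesis
  proof (rule that[OF \<alpha>])
    show "\<forall>i\<ge>12. k i = 0" by (simp add: k_def zero)
    show "even (k 0)" "even (k 1)"
      using U(1,2) unfolding \<alpha> by (simp_all add: of_int_div_numeral_in_Ints_iff)
    show "even (k 5 - k 4)" "even (k 6 - k 4)" "even (k 7 - k 4)"
      "even (k 9 - k 8)" "even (k 10 - k 8)" "even (k 11 - k 8)"
      using X(2-4) Y(2-4) unfolding \<alpha>
      by (simp_all add: of_int_div_numeral_in_Ints_iff flip: diff_divide_distrib of_int_diff)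
  qed
qed

lemma of_int_vec_in_latN:
  fixes v :: "nat \<Rightarrow> int"
  assumes "\<forall>i\<ge>12. v i = 0" "even (v 4 + v 5 + v 6 + v 7)" "even (v 8 + v 9 + v 10 + v 11)"
  shows "(\<lambda>i. of_int (v i)) \<in> latN"
  using assms by (simp add: latN_iff of_int_div_numeral_in_Ints_iff flip: of_int_add)

definition in_twice_D4 :: "int \<Rightarrow> int \<Rightarrow> int \<Rightarrow> int \<Rightarrow> bool" where
  "in_twice_D4 d1 d2 d3 d4 \<longleftrightarrow> even d1 \<and> even d2 \<and> even d3 \<and> even d4 \<and> 4 dvd d1 + d2 + d3 + d4"

lemma half_of_int_vec_in_latN:
  fixes d :: "nat \<Rightarrow> int"
  assumes "\<forall>i\<ge>12. d i = 0" and "even (d 0)" "even (d 1)" "even (d 2)" "even (d 3)"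
    and "in_twice_D4 (d 4) (d 5) (d 6) (d 7)" "in_twice_D4 (d 8) (d 9) (d 10) (d 11)"
  shows "(\<lambda>i. of_int (d i) / 2) \<in> latN"
proof -
  have quarter: "(of_int (d i) / 2 + of_int (d j) / 2 + of_int (d l) / 2 + of_int (d m) / 2) / 2
      = (of_int (d i + d j + d l + d m) / 4 :: rat)" for i j l m
    by (simp add: field_simps)
  have "even (d i)" if "i < 12" for i
    using less_twelve_cases[OF that] assms(2-7) by (auto simp: in_twice_D4_def)
  then show ?thesis
    using assms(1,6,7)
    by (simp add: latN_iff quarter in_twice_D4_def of_int_div_numeral_in_Ints_iff del: of_int_add)
qed

lemma half_sum_rho_in_latN:
  fixes r k :: "nat \<Rightarrow> int"
  assumes "\<forall>i\<ge>12. r i = 0" "\<forall>i\<ge>12. k i = 0"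
    and "even (k 0)" "even (k 1)" "even (r 0 + k 2)" "even (r 1 + k 3)"
    and "in_twice_D4 (r 4 + r 5 - k 4) (r 5 - r 4 - k 5) (r 6 + r 7 - k 6) (r 7 - r 6 - k 7)"
    and "in_twice_D4 (r 8 + r 9 - k 8) (r 9 - r 8 - k 9) (r 10 + r 11 - k 10) (r 11 - r 10 - k 11)"
  shows "(\<lambda>i. (of_int (r i) + rho (\<lambda>j. of_int (r j)) i) / 2 - of_int (k i) / 2) \<in> latN"
proof -
  define d where "d i =
    (if i = 0 then 2 * r 2 - k 0 else if i = 1 then 2 * r 1 + 2 * r 3 - k 1
     else if i = 2 then 2 * r 2 - r 0 - k 2 else if i = 3 then - r 1 - k 3
     else if i = 4 \<or> i = 6 \<or> i = 8 \<or> i = 10 then r i + r (i + 1) - k i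
     else if i = 5 \<or> i = 7 \<or> i = 9 \<or> i = 11 then r i - r (i - 1) - k i
     else 0)" for i
  have d: "(of_int (r i) + rho (\<lambda>j. of_int (r j)) i) / 2 - of_int (k i) / 2 = of_int (d i) / 2" for i
  proof (cases "i < 12")
    case True
    then show ?thesis
      using less_twelve_cases[OF True] by (auto simp: d_def rho_def field_simps)
  qed (use assms(1,2) in \<open>simp add: d_def rho_def\<close>)
  show ?thesis
    unfolding d by (rule half_of_int_vec_in_latN) (use assms(3-8) in \<open>simp_all add: d_def\<close>)
qed

lemma qN_is_one_doubled_iff:
  "qN_is_one (\<lambda>i. of_int (k i) / 2) \<longleftrightarrow>
     8 dvd 2 * (k 0 * k 1) + 4 * (k 2 * k 3) - ((k 4)\<^sup>2 + (k 5)\<^sup>2 + (k 6)\<^sup>2 + (k 7)\<^sup>2)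
       - ((k 8)\<^sup>2 + (k 9)\<^sup>2 + (k 10)\<^sup>2 + (k 11)\<^sup>2) - 4"
  (is "_ \<longleftrightarrow> 8 dvd ?n")
proof -
  have "(bil (\<lambda>i. of_int (k i) / 2) (\<lambda>i. of_int (k i) / 2) - 1) / 2 = (of_int ?n / 8 :: rat)"
    by (simp add: bil_eq field_simps power2_eq_square)
  then show ?thesis
    unfolding qN_is_one_def by (simp only: of_int_div_numeral_in_Ints_iff)
qed

lemma eight_dvd_even_square: "8 dvd (2 * m)\<^sup>2 - 4 * m" for m :: int
proof -
  have "even (m * (m - 1))" by simp
  then obtain t where "m * (m - 1) = 2 * t" ..
  then have "(2 * m)\<^sup>2 - 4 * m = 8 * t"
    by (simp add: power2_eq_square algebra_simps)
  then show ?thesis by simp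
qed

lemma eight_dvd_odd_square: "odd k \<Longrightarrow> 8 dvd k\<^sup>2 - 1" for k :: int
proof -
  assume "odd k"
  then obtain m where m: "k = 2 * m + 1" by (elim oddE)
  have "even (m * (m + 1))" by simp
  then obtain t where "m * (m + 1) = 2 * t" ..
  then have "k\<^sup>2 - 1 = 8 * t"
    by (simp add: m power2_eq_square algebra_simps)
  then show ?thesis by simp
qed

(* (x1 + x2, x2 - x1, x3 + x4, x4 - x3) is x + rho0 x, so the second conclusion says that
   (x + rho0 x)/2 and k/2 agree modulo D4. *)
lemma D4_rotation_representative:
  fixes k1 k2 k3 k4 :: int
  assumes "even (k2 - k1)" "even (k3 - k1)" "even (k4 - k1)"
  obtains x1 x2 x3 x4 :: int
  where "even (x1 + x2 + x3 + x4)"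
    and "in_twice_D4 (x1 + x2 - k1) (x2 - x1 - k2) (x3 + x4 - k3) (x4 - x3 - k4)"
    and "x1\<^sup>2 + x2\<^sup>2 + x3\<^sup>2 + x4\<^sup>2 \<in> {0, 2}"
    and "8 dvd k1\<^sup>2 + k2\<^sup>2 + k3\<^sup>2 + k4\<^sup>2 - 2 * (x1\<^sup>2 + x2\<^sup>2 + x3\<^sup>2 + x4\<^sup>2)"
proof -
  note representative = that
  \<comment> \<open>With the squares hidden behind K, the case goals below are linear, hence within presburger.\<close>
  define K where "K = k1\<^sup>2 + k2\<^sup>2 + k3\<^sup>2 + k4\<^sup>2"
  have witness: thesis
    if "even (x1 + x2 + x3 + x4)"
      and "in_twice_D4 (x1 + x2 - k1) (x2 - x1 - k2) (x3 + x4 - k3) (x4 - x3 - k4)"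
      and "x1\<^sup>2 + x2\<^sup>2 + x3\<^sup>2 + x4\<^sup>2 \<in> {0, 2}"
      and "8 dvd K - 2 * (x1\<^sup>2 + x2\<^sup>2 + x3\<^sup>2 + x4\<^sup>2)"
    for x1 x2 x3 x4
    using representative that unfolding K_def by blast
  show thesis
  proof (cases "even k1")
    case True
    with assms obtain m1 m2 m3 m4 where m: "k1 = 2 * m1" "k2 = 2 * m2" "k3 = 2 * m3" "k4 = 2 * m4"
      by (metis evenE even_add diff_add_cancel)
    have "8 dvd ((2 * m1)\<^sup>2 - 4 * m1) + ((2 * m2)\<^sup>2 - 4 * m2)
        + ((2 * m3)\<^sup>2 - 4 * m3) + ((2 * m4)\<^sup>2 - 4 * m4)"
      by (intro dvd_add eight_dvd_even_square)
    also have "\<dots> = K - 4 * (m1 + m2 + m3 + m4)"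
      by (simp add: K_def m)
    finally have squares: "8 dvd K - 4 * (m1 + m2 + m3 + m4)" .
    show thesis
    proof (cases "even (m1 + m2 + m3 + m4)")
      case True
      show thesis
        by (rule witness[of 0 0 0 0])
          (use m squares True in \<open>simp add: in_twice_D4_def; presburger\<close>)+
    next
      case False
      show thesis
        by (rule witness[of 1 1 0 0])
          (use m squares False in \<open>simp add: in_twice_D4_def; presburger\<close>)+
    qed
  next
    case False
    with assms have odd: "odd k1" "odd k2" "odd k3" "odd k4"
      by presburger+
    have "8 dvd (k1\<^sup>2 - 1) + (k2\<^sup>2 - 1) + (k3\<^sup>2 - 1) + (k4\<^sup>2 - 1)"
      using odd by (intro dvd_add eight_dvd_odd_square)
    then have squares: "8 dvd K - 4"
      by (simp add: K_def algebra_simps)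
    show thesis
    proof (cases "4 dvd k1 + k2 + k3 + k4")
      case True
      show thesis
        by (rule witness[of 0 1 0 1])
          (use odd squares True in \<open>simp add: in_twice_D4_def; presburger\<close>)+
    next
      case False
      show thesis
        by (rule witness[of 0 1 1 0])
          (use odd squares False in \<open>simp add: in_twice_D4_def; presburger\<close>)+
    qed
  qed
qed

lemma obtain_product_with_parities:
  fixes k l n :: int
  assumes "\<bar>n\<bar> \<le> 1" and "even (k * l - n)"
  obtains a b where "even (a - k)" "even (b - l)" "a * b = n"
proof (cases "n = 0")
  case True
  with assms(2) have "even k \<or> even l" by simp
  then show ?thesis
  proof
    assume "even k"
    show ?thesis by (rule that[of 0 l]) (use \<open>even k\<close> True in simp_all)
  next
    assume "even l"
    show ?thesis by (rule that[of k 0]) (use \<open>even l\<close> True in simp_all)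
  qed
next
  case False
  with assms(1) have "odd n" by auto
  with assms(2) have "odd k" "odd l" by auto
  show ?thesis by (rule that[of 1 n]) (use \<open>odd n\<close> \<open>odd k\<close> \<open>odd l\<close> in presburger)+
qed

lemma hyperbolic_representative:
  fixes k :: "nat \<Rightarrow> int" and s t :: int
  assumes "qN_is_one (\<lambda>i. of_int (k i) / 2)" and "even (k 0)" "even (k 1)"
    and "8 dvd (k 4)\<^sup>2 + (k 5)\<^sup>2 + (k 6)\<^sup>2 + (k 7)\<^sup>2 - 2 * s"
    and "8 dvd (k 8)\<^sup>2 + (k 9)\<^sup>2 + (k 10)\<^sup>2 + (k 11)\<^sup>2 - 2 * t"
    and "s \<in> {0, 2}" "t \<in> {0, 2}"
  obtains a b where "even (a - k 2)" "even (b - k 3)" "2 * (a * b) - s - t = -2"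
proof -
  define n where "n = (s + t) div 2 - 1"
  have k01: "8 dvd 2 * (k 0 * k 1)"
    using assms(2,3) by (auto elim!: evenE)
  have "8 dvd (2 * (k 0 * k 1) + 4 * (k 2 * k 3) - ((k 4)\<^sup>2 + (k 5)\<^sup>2 + (k 6)\<^sup>2 + (k 7)\<^sup>2)
       - ((k 8)\<^sup>2 + (k 9)\<^sup>2 + (k 10)\<^sup>2 + (k 11)\<^sup>2) - 4) - 2 * (k 0 * k 1)
       + ((k 4)\<^sup>2 + (k 5)\<^sup>2 + (k 6)\<^sup>2 + (k 7)\<^sup>2 - 2 * s)
       + ((k 8)\<^sup>2 + (k 9)\<^sup>2 + (k 10)\<^sup>2 + (k 11)\<^sup>2 - 2 * t)"
    using dvd_add[OF dvd_add[OF dvd_diff[OF assms(1)[unfolded qN_is_one_doubled_iff] k01]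
        assms(4)] assms(5)] .
  also have "\<dots> = 4 * (k 2 * k 3 - n - 2)"
    using assms(6,7) by (auto simp: n_def)
  finally have "8 dvd 4 * (k 2 * k 3 - n - 2)" .
  moreover have "even x" if "8 dvd 4 * (x - 2)" for x :: int
    using that by presburger
  ultimately have "even (k 2 * k 3 - n)" by blast
  moreover have "\<bar>n\<bar> \<le> 1"
    using assms(6,7) by (auto simp: n_def)
  ultimately obtain a b where "even (a - k 2)" "even (b - k 3)" "a * b = n"
    using obtain_product_with_parities by blast
  moreover have "2 * n - s - t = -2"
    using assms(6,7) by (auto simp: n_def)
  ultimately show thesis
    using that by simp
qed

theorem lemma4p6:
  assumes "\<alpha> \<in> dualN" and "qN_is_one \<alpha>"
  shows "\<exists>r\<in>latN. bil r r = -2 \<and>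
           (\<lambda>i. (r i + rho r i) / 2 - \<alpha> i) \<in> latN"
proof -
  obtain k where \<alpha>: "\<alpha> = (\<lambda>i. of_int (k i) / 2)"
    and k: "\<forall>i\<ge>12. k i = 0" "even (k 0)" "even (k 1)"
    and X: "even (k 5 - k 4)" "even (k 6 - k 4)" "even (k 7 - k 4)"
    and Y: "even (k 9 - k 8)" "even (k 10 - k 8)" "even (k 11 - k 8)"
    using dualN_doubled_coordinates[OF assms(1)] .
  obtain x1 x2 x3 x4 where x: "even (x1 + x2 + x3 + x4)"
    "in_twice_D4 (x1 + x2 - k 4) (x2 - x1 - k 5) (x3 + x4 - k 6) (x4 - x3 - k 7)"
    "x1\<^sup>2 + x2\<^sup>2 + x3\<^sup>2 + x4\<^sup>2 \<in> {0, 2}"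
    "8 dvd (k 4)\<^sup>2 + (k 5)\<^sup>2 + (k 6)\<^sup>2 + (k 7)\<^sup>2 - 2 * (x1\<^sup>2 + x2\<^sup>2 + x3\<^sup>2 + x4\<^sup>2)"
    using D4_rotation_representative[OF X] .
  obtain y1 y2 y3 y4 where y: "even (y1 + y2 + y3 + y4)"
    "in_twice_D4 (y1 + y2 - k 8) (y2 - y1 - k 9) (y3 + y4 - k 10) (y4 - y3 - k 11)"
    "y1\<^sup>2 + y2\<^sup>2 + y3\<^sup>2 + y4\<^sup>2 \<in> {0, 2}"
    "8 dvd (k 8)\<^sup>2 + (k 9)\<^sup>2 + (k 10)\<^sup>2 + (k 11)\<^sup>2 - 2 * (y1\<^sup>2 + y2\<^sup>2 + y3\<^sup>2 + y4\<^sup>2)"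
    using D4_rotation_representative[OF Y] .
  obtain a b where ab: "even (a - k 2)" "even (b - k 3)"
    "2 * (a * b) - (x1\<^sup>2 + x2\<^sup>2 + x3\<^sup>2 + x4\<^sup>2) - (y1\<^sup>2 + y2\<^sup>2 + y3\<^sup>2 + y4\<^sup>2) = -2"
    using hyperbolic_representative[OF assms(2)[unfolded \<alpha>] k(2,3) x(4) y(4) x(3) y(3)] .
  define r :: "nat \<Rightarrow> int"
    where "r i = (if i < 12 then [a, b, 0, 0, x1, x2, x3, x4, y1, y2, y3, y4] ! i else 0)" for i
  have "(\<lambda>i. of_int (r i)) \<in> latN"
    by (rule of_int_vec_in_latN) (use x(1) y(1) in \<open>simp_all add: r_def\<close>)
  moreover have "bil (\<lambda>i. of_int (r i)) (\<lambda>i. of_int (r i)) = -2"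
  proof -
    have "bil (\<lambda>i. of_int (r i)) (\<lambda>i. of_int (r i))
        = of_int (2 * (a * b) - (x1\<^sup>2 + x2\<^sup>2 + x3\<^sup>2 + x4\<^sup>2) - (y1\<^sup>2 + y2\<^sup>2 + y3\<^sup>2 + y4\<^sup>2))"
      by (simp add: bil_eq r_def power2_eq_square)
    then show ?thesis
      unfolding ab(3) by simp
  qed
  moreover have "(\<lambda>i. (of_int (r i) + rho (\<lambda>j. of_int (r j)) i) / 2 - \<alpha> i) \<in> latN"
    unfolding \<alpha>
    by (rule half_sum_rho_in_latN)
      (use k ab(1,2) x(2) y(2) in \<open>simp_all add: r_def algebra_simps\<close>)
  ultimately show ?thesis by force
qed

end
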